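(* Every betweenness algebra $\langle A,f,g\rangle$ is a discriminator algebra; specifically, the map $d(a)=f(a,a)+-g(a,a)$ is the unary discriminator on $A$, i.e. $d(0)=0$ and $d(a)=1$ for all $a\neq0$.
   Context: A PS-algebra is $\langle A,f,g\rangle$ where $A$ is a Boolean algebra with at least two elements (operations $+,\cdot,-,0,1$) and $f,g\colon A^2\to A$ satisfy: $f(x,y)=0$ whenever $x=0$ or $y=0$; $f$ is additive in each argument; $g(x,y)=1$ whenever $x=0$ or $y=0$; $g$ is co-additive in each argument ($g(x+x',y)=g(x,y)\cdot g(x',y)$, $g(x,y+y')=g(x,y)\cdot g(x,y')$). A betweenness algebra is a PS-algebra satisfying for all $x,y,z$: (ABT0) $x\leq f(x,x)$; (ABT1$_f$) $f(x,y)\leq f(y,x)$; (ABT1$_g$) $g(x,y)\leq g(y,x)$; (ABT2) $y\cdot f(x,z)\leq f(x\cdot f(x,y),z)$; (ABT3) $f(x,g(x,-y)\cdot y)\leq y$; (wMIA) if $x\neq0$ and $y\neq0$ then $g(x,y)\leq f(x,y)$. *)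

theory Defs
  imports Main
begin

text \<open>Boolean algebra operations: + is sup, \<cdot> is inf, - is uminus, 0 is bot, 1 is top,
  order \<le> is the lattice order. The carrier is the type 'a.\<close>

definition PS_algebra :: "('a::boolean_algebra \<Rightarrow> 'a \<Rightarrow> 'a) \<Rightarrow> ('a \<Rightarrow> 'a \<Rightarrow> 'a) \<Rightarrow> bool" where
  "PS_algebra f g \<longleftrightarrow>
     (bot::'a) \<noteq> top \<and>
     (\<forall>x y. (x = bot \<or> y = bot) \<longrightarrow> f x y = bot) \<and>
     (\<forall>x x' y. f (sup x x') y = sup (f x y) (f x' y)) \<and>
     (\<forall>x y y'. f x (sup y y') = sup (f x y) (f x y')) \<and>
     (\<forall>x y. (x = bot \<or> y = bot) \<longrightarrow> g x y = top) \<and>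
     (\<forall>x x' y. g (sup x x') y = inf (g x y) (g x' y)) \<and>
     (\<forall>x y y'. g x (sup y y') = inf (g x y) (g x y'))"

definition betweenness_algebra :: "('a::boolean_algebra \<Rightarrow> 'a \<Rightarrow> 'a) \<Rightarrow> ('a \<Rightarrow> 'a \<Rightarrow> 'a) \<Rightarrow> bool" where
  "betweenness_algebra f g \<longleftrightarrow>
     PS_algebra f g \<and>
     (\<forall>x. x \<le> f x x) \<and>
     (\<forall>x y. f x y \<le> f y x) \<and>
     (\<forall>x y. g x y \<le> g y x) \<and>
     (\<forall>x y z. inf y (f x z) \<le> f (inf x (f x y)) z) \<and>
     (\<forall>x y. f x (inf (g x (- y)) y) \<le> y) \<and>
     (\<forall>x y. x \<noteq> bot \<and> y \<noteq> bot \<longrightarrow> g x y \<le> f x y)"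

definition unary_discriminator :: "('a::boolean_algebra \<Rightarrow> 'a) \<Rightarrow> bool" where
  "unary_discriminator d \<longleftrightarrow> d bot = bot \<and> (\<forall>a. a \<noteq> bot \<longrightarrow> d a = top)"

end

theory Submission
  imports Defs
begin

text \<open>Of the betweenness axioms only (wMIA) is needed: for a \<noteq> 0 it gives g(a,a) \<le> f(a,a),
  so f(a,a) + -g(a,a) \<ge> g(a,a) + -g(a,a) = 1, while the normality axioms give
  f(0,0) = 0 and g(0,0) = 1.\<close>

lemma PS_algebra_diagonal_bot:
  assumes "PS_algebra f g"
  shows "f bot bot = bot" and "g bot bot = top"
  using assms unfolding PS_algebra_def by auto

lemma unary_discriminator_if_weak_MIA:
  fixes f g :: "'a::boolean_algebra \<Rightarrow> 'a \<Rightarrow> 'a"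
  assumes "PS_algebra f g"
    and weak_MIA: "\<And>a. a \<noteq> bot \<Longrightarrow> g a a \<le> f a a"
  shows "unary_discriminator (\<lambda>a. sup (f a a) (- g a a))"
  unfolding unary_discriminator_def
  using PS_algebra_diagonal_bot[OF assms(1)] weak_MIA by (simp add: sup_shunt)

theorem corollary39:
  fixes f g :: "'a::boolean_algebra \<Rightarrow> 'a \<Rightarrow> 'a"
  assumes "betweenness_algebra f g"
  shows "unary_discriminator (\<lambda>a. sup (f a a) (- g a a))"
proof (rule unary_discriminator_if_weak_MIA[of f g])
  show "PS_algebra f g"
    using assms unfolding betweenness_algebra_def by blast
  show "g a a \<le> f a a" if "a \<noteq> bot" for a
    using assms that unfolding betweenness_algebra_def by blast
qed

end
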